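(* Let $A>0$ be fixed. For $X$ large set $\rho=e^{-1/X}$, $Q=(\log X)^A$ and $\delta_q=q^{-1}X^{-1}(\log X)^A$. For $1\le a\le q\le Q$ with $(a,q)=1$ let $\mathfrak{M}(q,a)=\big(\frac aq-\delta_q,\frac aq+\delta_q\big)$, let $\mathfrak{M}$ be the union of all these intervals, and let $\mathfrak{m}=[-\frac12,\frac12)\setminus\mathfrak{M}$ (arcs understood modulo $1$). Then for $\theta\in\mathfrak{m}$, \[ \Phi_{|\mu|}(\rho\operatorname{e}(\theta))\ll_A X(\log X)^{10-A/4}. \]
   Context: $\operatorname{e}(x)=\exp(2\pi i x)$; $\mu$ is the Möbius function; for $|z|<1$, $\Phi_{|\mu|}(z):=\sum_{j=1}^\infty\sum_{n=1}^\infty\frac{|\mu(n)|}{j}z^{jn}$ (so that $\prod_{n\ge1}(1-z^n)^{-|\mu(n)|}=\exp(\Phi_{|\mu|}(z))$). $\ll_A$ means the implied constant may depend on $A$. *)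

theory Defs
  imports "HOL-Analysis.Analysis" "HOL-Computational_Algebra.Squarefree"
begin

definition ee :: "real \<Rightarrow> complex" where
  "ee x = exp (2 * of_real pi * \<i> * of_real x)"

definition moebius :: "nat \<Rightarrow> int" where
  "moebius n = (if n = 0 then 0 else if squarefree n then (-1) ^ card (prime_factors n) else 0)"

definition Phi_absmu :: "complex \<Rightarrow> complex" where
  "Phi_absmu z = (\<Sum>j. \<Sum>n. of_int \<bar>moebius (Suc n)\<bar> / of_nat (Suc j) * z ^ (Suc j * Suc n))"

definition delta_q :: "real \<Rightarrow> real \<Rightarrow> nat \<Rightarrow> real" where
  "delta_q A X q = (ln X) powr A / (real q * X)"

definition major_arcs :: "real \<Rightarrow> real \<Rightarrow> real set" where
  "major_arcs A X = {\<theta>. \<exists>q a (k::int). 1 \<le> a \<and> a \<le> q \<and> real q \<le> (ln X) powr A \<and> coprime a q \<and>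
      \<bar>\<theta> - real a / real q - of_int k\<bar> < delta_q A X q}"

definition minor_arcs :: "real \<Rightarrow> real \<Rightarrow> real set" where
  "minor_arcs A X = {-1/2..<1/2} - major_arcs A X"

end

(*
  Write z = rho e(theta) with rho = exp(-1/X), and T(w) = sum_{n>=1} |mu(n)| w^n.  Expanding the
  logarithm, Phi_|mu|(z) = sum_{j>=1} T(z^j) / j, and since |mu(n)| = sum_{d^2 | n} mu(d) there is the
  Lambert-type expansion T(w) = sum_{d>=1} mu(d) w^(d^2) / (1 - w^(d^2)).  So everything reduces to
  the terms z^m / (1 - z^m) with m = j d^2.  Trivially |z^m / (1 - z^m)| <= X / m.  If m <= Q =
  (log X)^A, then m theta has distance >= Q / X from the integers (otherwise theta would lie on a
  major arc with denominator q <= m), hence |1 - z^m| >= Q / X and the term is at most X / Q.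
  Together |z^m / (1 - z^m)| <= X m^(-3/4) Q^(-1/4), and summing over j and d gives
  Phi_|mu|(z) << X Q^(-1/4) = X (log X)^(-A/4), which is stronger than the stated bound.
*)

theory Submission
  imports Defs "HOL-Real_Asymp.Real_Asymp"
begin

lemma moebius_mult_prime:
  assumes "prime p"
  shows "moebius (d * p) = (if p dvd d then 0 else - moebius d)"
proof (cases "p dvd d")
  case True
  then have "p\<^sup>2 dvd d * p" by (auto simp: power2_eq_square)
  then have "\<not> squarefree (d * p)"
    using assms by (metis not_prime_unit squarefreeD)
  then show ?thesis using True by (simp add: moebius_def)
next
  case False
  have d0: "d \<noteq> 0" using False by (metis dvd_0_right)
  have p0: "p \<noteq> 0" using assms by auto
  have "coprime d p" using prime_imp_coprime[OF assms False] by (simp add: ac_simps)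
  then have sq: "squarefree (d * p) \<longleftrightarrow> squarefree d"
    using assms squarefree_mult_coprime squarefree_prime squarefree_multD by blast
  have "prime_factors (d * p) = insert p (prime_factors d)"
    using prime_factors_product[OF d0 p0] assms by (simp add: prime_prime_factors)
  moreover have "p \<notin> prime_factors d" using False by auto
  ultimately have "card (prime_factors (d * p)) = Suc (card (prime_factors d))"
    by simp
  then show ?thesis using False sq d0 p0 by (simp add: moebius_def)
qed

lemma sum_moebius_divisors:
  assumes "k > 0"
  shows "(\<Sum>d | d dvd k. moebius d) = (if k = 1 then 1 else 0)"
proof (cases "k = 1")
  case True
  then show ?thesis by (simp add: moebius_def)
next
  case False
  then obtain p where p: "prime p" "p dvd k" using assms prime_factor_nat by blast
  define D where "D = {d. d dvd k}"
  \<comment> \<open>Multiplication by \<open>p\<close> maps \<open>S\<close> onto the divisors divisible by \<open>p\<close> with nonzero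
      Moebius value, flipping the sign.\<close>
  define S where "S = {d \<in> D. \<not> p dvd d \<and> squarefree d}"
  have fin: "finite D" using assms by (simp add: D_def)
  have "sum moebius (D - {d. p dvd d}) = sum moebius S"
    by (rule sum.mono_neutral_right) (use fin in \<open>auto simp: S_def moebius_def\<close>)
  moreover have "sum moebius (D \<inter> {d. p dvd d}) = sum moebius ((\<lambda>d. d * p) ` S)"
  proof (rule sum.mono_neutral_right)
    show "(\<lambda>d. d * p) ` S \<subseteq> D \<inter> {d. p dvd d}"
    proof clarify
      fix d assume "d \<in> S"
      then have "d dvd k" "coprime p d"
        using p by (auto simp: S_def D_def prime_imp_coprime)
      then show "d * p \<in> D \<inter> {d. p dvd d}" using p by (simp add: D_def divides_mult ac_simps)
    qed
    show "\<forall>x \<in> D \<inter> {d. p dvd d} - (\<lambda>d. d * p) ` S. moebius x = 0"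
    proof
      fix x assume x: "x \<in> D \<inter> {d. p dvd d} - (\<lambda>d. d * p) ` S"
      then have "p dvd x" by blast
      then obtain e where e: "x = e * p" by (metis dvdE mult.commute)
      have "e \<in> D" using x e by (auto simp: D_def intro: dvd_mult_left)
      then have "p dvd e \<or> \<not> squarefree e" using x e by (auto simp: S_def)
      then show "moebius x = 0"
        unfolding e moebius_mult_prime[OF p(1)] by (auto simp: moebius_def)
    qed
  qed (use fin in simp)
  moreover have "sum moebius ((\<lambda>d. d * p) ` S) = - sum moebius S"
    using p by (subst sum.reindex) (auto simp: inj_on_def S_def moebius_mult_prime sum_negf)
  ultimately have "sum moebius D = 0"
    using sum.Int_Diff[OF fin, of moebius "{d. p dvd d}"] by simp
  then show ?thesis using False by (simp add: D_def)
qed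

lemma squarefree_iff_square_part_eq_1: "squarefree (n :: nat) \<longleftrightarrow> square_part n = 1"
  unfolding squarefree_def dvd_square_part_iff[symmetric]
  by (metis dvd_refl nat_dvd_1_iff_1)

lemma square_part_pos: "n > 0 \<Longrightarrow> square_part n > (0 :: nat)"
  by (simp add: neq0_conv[symmetric] del: neq0_conv)

lemma sum_moebius_square_divisors:
  assumes "n > 0"
  shows "(\<Sum>d | d\<^sup>2 dvd n. moebius d) = \<bar>moebius n\<bar>"
proof -
  have "(\<Sum>d | d\<^sup>2 dvd n. moebius d) = (\<Sum>d | d dvd square_part n. moebius d)"
    by (simp add: dvd_square_part_iff)
  also have "\<dots> = (if square_part n = 1 then 1 else 0)"
    using assms by (intro sum_moebius_divisors square_part_pos)
  also have "\<dots> = \<bar>moebius n\<bar>"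
    using assms squarefree_iff_square_part_eq_1[of n] by (simp add: moebius_def)
  finally show ?thesis .
qed

lemma abs_moebius_le_1: "\<bar>moebius n\<bar> \<le> 1"
  by (simp add: moebius_def)

lemma norm_moebius_mult_le:
  fixes x :: "'a :: real_normed_div_algebra"
  shows "norm (of_int (moebius n) * x) \<le> norm x"
proof -
  have "norm (of_int (moebius n) * x) = \<bar>real_of_int (moebius n)\<bar> * norm x"
    by (simp add: norm_mult norm_of_int)
  also have "\<dots> \<le> norm x" using abs_moebius_le_1[of n] by (intro mult_left_le_one_le) auto
  finally show ?thesis .
qed

lemma summable_on_power_mult:
  fixes r :: real
  assumes r: "0 \<le> r" "r < 1"
  shows "(\<lambda>(d, m). r ^ (d * m)) summable_on ({1..} \<times> {1..})"
proof (rule summable_on_SigmaI[where g = "\<lambda>d. r ^ d / (1 - r ^ d)"])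
  have rd: "r ^ d \<le> r" "r ^ d < 1" if "d \<ge> 1" for d :: nat
    using r that by (auto simp: power_decreasing[of 1 d r, simplified] power_less_one_iff)
  show "((\<lambda>m. case (d, m) of (d, m) \<Rightarrow> r ^ (d * m)) has_sum r ^ d / (1 - r ^ d)) {1..}"
    if "d \<in> {1..}" for d :: nat
    using has_sum_geometric_from_1[of "r ^ d"] rd[of d] r that by (simp add: power_mult)
  have "(\<lambda>d. r ^ d / (1 - r)) summable_on {1..}"
    using has_sum_divide_const[OF has_sum_geometric_from_1[of r]] r by (auto intro: has_sum_imp_summable)
  then show "(\<lambda>d. r ^ d / (1 - r ^ d)) summable_on {1..}"
  proof (rule summable_on_comparison_test)
    show "r ^ d / (1 - r ^ d) \<le> r ^ d / (1 - r)" if "d \<in> {1..}" for d :: nat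
      using r rd[of d] that by (intro divide_left_mono) auto
    show "0 \<le> r ^ d / (1 - r ^ d)" if "d \<in> {1..}" for d :: nat
      using r rd[of d] that by simp
  qed
qed (use r in auto)

lemma has_sum_square_divisor_reindex:
  fixes f :: "nat \<Rightarrow> nat \<Rightarrow> 'a :: {comm_monoid_add, topological_space}"
  shows "((\<lambda>(d, m). f d (d\<^sup>2 * m)) has_sum S) ({1..} \<times> {1..}) \<longleftrightarrow>
         ((\<lambda>(n, d). f d n) has_sum S) (SIGMA n:{1..}. {d. d\<^sup>2 dvd n})"
proof (rule has_sum_reindex_bij_witness[where i = "\<lambda>(n, d). (d, n div d\<^sup>2)" and j = "\<lambda>(d, m). (d\<^sup>2 * m, d)"])
  fix nd :: "nat \<times> nat" assume "nd \<in> (SIGMA n:{1..}. {d. d\<^sup>2 dvd n})"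
  then obtain n d :: nat where nd: "nd = (n, d)" "n \<ge> 1" "d\<^sup>2 dvd n" by auto
  then have "d \<noteq> 0" by (cases "d = 0") auto
  moreover have "n div d\<^sup>2 \<noteq> 0" using nd \<open>d \<noteq> 0\<close> by (auto elim!: dvdE)
  ultimately show "(case nd of (n, d) \<Rightarrow> (d, n div d\<^sup>2)) \<in> {1..} \<times> {1..}" by (simp add: nd)
qed (auto elim!: dvdE)

lemma summable_abs_moebius_power:
  fixes w :: "'a :: {real_normed_field, banach}"
  assumes "norm w < 1"
  shows "summable (\<lambda>n. of_int \<bar>moebius (Suc n)\<bar> * w ^ Suc n)"
proof (rule summable_comparison_test')
  show "summable (\<lambda>n. norm w ^ Suc n)" using assms by (simp add: summable_geometric)
  show "norm (of_int \<bar>moebius (Suc n)\<bar> * w ^ Suc n) \<le> norm w ^ Suc n" for n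
    by (simp add: norm_mult norm_power mult_left_le_one_le moebius_def)
qed

lemma has_sum_lambert_abs_moebius:
  fixes w :: complex
  assumes w: "norm w < 1"
  shows "((\<lambda>d. of_int (moebius d) * (w ^ d\<^sup>2 / (1 - w ^ d\<^sup>2))) has_sum
           (\<Sum>n. of_int \<bar>moebius (Suc n)\<bar> * w ^ Suc n)) {1..}"
proof -
  \<comment> \<open>Both sides regroup the absolutely convergent double series of \<open>\<mu>(d) w^(d\<^sup>2 m)\<close> over
      \<open>d, m \<ge> 1\<close>: by \<open>d\<close>, resp. by \<open>n = d\<^sup>2 m\<close>.\<close>
  define f where "f = (\<lambda>d m. of_int (moebius d) * w ^ m)"
  have "(\<lambda>(d, m). norm w ^ (d * m)) summable_on ({1..} \<times> {1..})"
    using w by (intro summable_on_power_mult) auto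
  then have "(\<lambda>dm. norm (case dm of (d, m) \<Rightarrow> f d (d\<^sup>2 * m))) summable_on ({1..} \<times> {1..})"
    by (rule Infinite_Sum.abs_summable_on_comparison_test')
       (use w in \<open>auto simp: f_def norm_mult norm_power moebius_def power2_eq_square
                   mult_left_le_one_le intro!: power_decreasing\<close>)
  then have "(\<lambda>(d, m). f d (d\<^sup>2 * m)) summable_on ({1..} \<times> {1..})"
    by (rule Infinite_Sum.abs_summable_summable)
  then obtain S where S: "((\<lambda>(d, m). f d (d\<^sup>2 * m)) has_sum S) ({1..} \<times> {1..})"
    by (auto simp: summable_on_def)
  have lambert: "((\<lambda>d. of_int (moebius d) * (w ^ d\<^sup>2 / (1 - w ^ d\<^sup>2))) has_sum S) {1..}"
  proof (rule has_sum_Sigma'[OF S])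
    fix d :: nat assume "d \<in> {1..}"
    then have "norm (w ^ d\<^sup>2) < 1" using w by (simp add: norm_power power_less_one_iff)
    from has_sum_cmult_right[OF has_sum_geometric_from_1[OF this]]
    show "((\<lambda>m. case (d, m) of (d, m) \<Rightarrow> f d (d\<^sup>2 * m)) has_sum
            of_int (moebius d) * (w ^ d\<^sup>2 / (1 - w ^ d\<^sup>2))) {1..}"
      by (simp add: f_def power_mult)
  qed
  have "((\<lambda>n. of_int (\<Sum>d | d\<^sup>2 dvd n. moebius d) * w ^ n) has_sum S) {1..}"
  proof (rule has_sum_Sigma'[OF S[unfolded has_sum_square_divisor_reindex]])
    fix n :: nat assume "n \<in> {1..}"
    then have "finite {d. d dvd square_part n}" by (intro finite_divisors_nat square_part_pos) simp
    then have "finite {d. d\<^sup>2 dvd n}" by (simp add: dvd_square_part_iff)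
    then show "((\<lambda>d. case (n, d) of (n, d) \<Rightarrow> f d n) has_sum of_int (\<Sum>d | d\<^sup>2 dvd n. moebius d) * w ^ n)
                {d. d\<^sup>2 dvd n}"
      by (simp add: f_def has_sum_finiteI sum_distrib_right)
  qed
  then have "((\<lambda>n. of_int \<bar>moebius n\<bar> * w ^ n) has_sum S) {1..}"
    by (rule has_sum_cong[THEN iffD1, rotated]) (simp add: sum_moebius_square_divisors)
  then have "((\<lambda>n. of_int \<bar>moebius (Suc n)\<bar> * w ^ Suc n) has_sum S) UNIV"
    by (subst has_sum_reindex_bij_witness[where i = "\<lambda>n. n - 1" and j = Suc]) auto
  then have "(\<Sum>n. of_int \<bar>moebius (Suc n)\<bar> * w ^ Suc n) = S"
    by (metis has_sum_imp_sums sums_unique)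
  then show ?thesis using lambert by simp
qed

lemma powr_nat_mult_square:
  fixes j d :: nat and s :: real
  shows "real (j * d\<^sup>2) powr s = real j powr s * real d powr (2 * s)"
proof (cases "d = 0")
  case False
  then have "real d ^ 2 = real d powr 2" using powr_realpow[of "real d" 2] by simp
  then have "(real d ^ 2) powr s = real d powr (2 * s)" by (simp only: powr_powr)
  then show ?thesis by (simp add: powr_mult)
qed simp

lemma norm_Phi_absmu_le:
  fixes z :: complex and B :: real
  assumes z: "norm z < 1" and B: "0 \<le> B"
    and bound: "\<And>m. 1 \<le> m \<Longrightarrow> norm (z ^ m / (1 - z ^ m)) \<le> B * real m powr (-3/4)"
  shows "norm (Phi_absmu z) \<le>
           B * (\<Sum>\<^sub>\<infinity>d\<in>{1..}. real d powr (-3/2)) * (\<Sum>j. real (Suc j) powr (-7/4))"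
proof -
  define C where "C = (\<Sum>\<^sub>\<infinity>d\<in>{1..}. real d powr (-3/2))"
  have "summable (\<lambda>d. real d powr (-3/2))" by (simp add: summable_real_powr_iff)
  then have "(\<lambda>d. real d powr (-3/2)) summable_on UNIV"
    by (intro norm_summable_imp_summable_on) simp
  then have "(\<lambda>d. real d powr (-3/2)) summable_on {1..}"
    by (rule summable_on_subset_banach) simp
  then have C: "((\<lambda>d. real d powr (-3/2)) has_sum C) {1..}" by (simp add: C_def has_sum_infsum)
  have "summable (\<lambda>j. real j powr (-7/4))" by (simp add: summable_real_powr_iff)
  then have summable_j: "summable (\<lambda>j. real (Suc j) powr (-7/4))" by (subst summable_Suc_iff)
  have inner: "norm (\<Sum>n. of_int \<bar>moebius (Suc n)\<bar> / of_nat (Suc j) * z ^ (Suc j * Suc n))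
                 \<le> B * C * real (Suc j) powr (-7/4)" for j
  proof -
    define w where "w = z ^ Suc j"
    define T where "T = (\<Sum>n. of_int \<bar>moebius (Suc n)\<bar> * w ^ Suc n)"
    have w: "norm w < 1" using z by (simp add: w_def norm_power power_less_one_iff del: power_Suc)
    have "(\<lambda>n. of_int \<bar>moebius (Suc n)\<bar> / of_nat (Suc j) * z ^ (Suc j * Suc n))
            = (\<lambda>n. of_int \<bar>moebius (Suc n)\<bar> * w ^ Suc n / of_nat (Suc j))"
      by (simp only: w_def power_mult times_divide_eq_left)
    then have "(\<Sum>n. of_int \<bar>moebius (Suc n)\<bar> / of_nat (Suc j) * z ^ (Suc j * Suc n))
                 = T / of_nat (Suc j)"
      unfolding T_def by (simp only: suminf_divide[OF summable_abs_moebius_power[OF w]])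
    then have "norm (\<Sum>n. of_int \<bar>moebius (Suc n)\<bar> / of_nat (Suc j) * z ^ (Suc j * Suc n))
                 = norm T / real (Suc j)"
      by (simp only: norm_divide norm_of_nat)
    also have "norm T \<le> B * real (Suc j) powr (-3/4) * C"
      unfolding T_def
    proof (rule norm_infsum_le[OF has_sum_lambert_abs_moebius[OF w] has_sum_cmult_right[OF C]])
      fix d :: nat assume "d \<in> {1..}"
      have "norm (of_int (moebius d) * (w ^ d\<^sup>2 / (1 - w ^ d\<^sup>2))) \<le> norm (w ^ d\<^sup>2 / (1 - w ^ d\<^sup>2))"
        by (rule norm_moebius_mult_le)
      also have "\<dots> \<le> B * real (Suc j * d\<^sup>2) powr (-3/4)"
        unfolding w_def power_mult[symmetric]
        by (rule bound) (use \<open>d \<in> {1..}\<close> in \<open>simp add: Suc_le_eq\<close>)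
      also have "\<dots> = B * real (Suc j) powr (-3/4) * real d powr (-3/2)"
        by (simp only: powr_nat_mult_square) (simp add: mult.assoc)
      finally show "norm (of_int (moebius d) * (w ^ d\<^sup>2 / (1 - w ^ d\<^sup>2)))
                      \<le> B * real (Suc j) powr (-3/4) * real d powr (-3/2)" .
    qed
    also have "B * real (Suc j) powr (-3/4) * C / real (Suc j)
                 = B * C * (real (Suc j) powr (-3/4) / real (Suc j))"
      by simp
    also have "real (Suc j) powr (-3/4) / real (Suc j) = real (Suc j) powr (-7/4)"
      using powr_diff[of "real (Suc j)" "-3/4" 1] by simp
    finally show ?thesis by (simp add: divide_right_mono)
  qed
  have "norm (Phi_absmu z) \<le> (\<Sum>j. B * C * real (Suc j) powr (-7/4))"
    unfolding Phi_absmu_def using summable_j by (intro norm_suminf_le inner summable_mult)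
  also have "\<dots> = B * C * (\<Sum>j. real (Suc j) powr (-7/4))" by (rule suminf_mult[OF summable_j])
  finally show ?thesis by (simp add: C_def)
qed

lemma abs_sin_ge_third:
  fixes x :: real
  assumes "\<bar>x\<bar> \<le> 2"
  shows "\<bar>x\<bar> / 3 \<le> \<bar>sin x\<bar>"
proof -
  have "(\<Sum>m<3. sin_coeff m * x ^ m) = x"
    by (simp add: sin_coeff_def eval_nat_numeral)
  then have "\<bar>sin x - x\<bar> \<le> inverse (fact 3) * \<bar>x\<bar> ^ 3"
    using Maclaurin_sin_bound[of x 3] by simp
  moreover have "\<bar>x\<bar> ^ 3 \<le> \<bar>x\<bar> * 4"
  proof -
    have "\<bar>x\<bar>\<^sup>2 \<le> 2\<^sup>2" using assms by (intro power_mono) auto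
    then have "\<bar>x\<bar> * \<bar>x\<bar>\<^sup>2 \<le> \<bar>x\<bar> * 4" by (intro mult_left_mono) auto
    then show ?thesis by (simp add: power3_eq_cube power2_eq_square)
  qed
  ultimately have "\<bar>sin x - x\<bar> \<le> \<bar>x\<bar> * 4 / 6" by (simp add: fact_numeral)
  then show ?thesis by linarith
qed

lemma norm_ee [simp]: "norm (ee x) = 1"
  by (simp add: ee_def)

lemma ee_add_of_int: "ee (x + of_int k) = ee x"
proof -
  have "2 * of_real pi * \<i> * of_real (x + of_int k) =
        2 * of_real pi * \<i> * of_real x + of_int k * (2 * of_real pi * \<i>)"
    by (simp add: algebra_simps)
  then have "ee (x + of_int k) = ee x * exp (of_int k * (2 * of_real pi * \<i>))"
    by (simp add: ee_def exp_add)
  also have "exp (of_int k * (2 * of_real pi * \<i>)) = 1" by (simp add: exp_eq_1)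
  finally show ?thesis by simp
qed

lemma ee_power: "ee x ^ m = ee (real m * x)"
  by (simp add: ee_def exp_of_nat_mult[symmetric] algebra_simps)

lemma abs_le_norm_one_minus_mult_ee:
  assumes t: "exp (-1) \<le> t" and \<psi>: "\<bar>\<psi>\<bar> \<le> 1/2"
  shows "\<bar>\<psi>\<bar> \<le> norm (1 - of_real t * ee \<psi>)"
proof -
  have "(norm (1 - of_real t * ee \<psi>))\<^sup>2 = 1 + t\<^sup>2 - 2 * t * cos (2 * (pi * \<psi>))"
    using cmod_diff_squared[of 1 0 t "2 * pi * \<psi>"] by (simp add: ee_def ac_simps)
  also have "\<dots> = (1 - t)\<^sup>2 + 4 * t * (sin (pi * \<psi>))\<^sup>2"
    by (simp only: cos_double_sin) (simp add: power2_eq_square algebra_simps)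
  finally have norm2: "(norm (1 - of_real t * ee \<psi>))\<^sup>2 = (1 - t)\<^sup>2 + 4 * t * (sin (pi * \<psi>))\<^sup>2" .
  have pi\<psi>: "\<bar>pi * \<psi>\<bar> = pi * \<bar>\<psi>\<bar>" by (simp add: abs_mult)
  have "pi * \<bar>\<psi>\<bar> \<le> 4 * (1/2)"
    using \<psi> pi_less_4 by (intro mult_mono) auto
  then have "\<bar>pi * \<psi>\<bar> / 3 \<le> \<bar>sin (pi * \<psi>)\<bar>" by (intro abs_sin_ge_third) (simp add: pi\<psi>)
  moreover have "3 * \<bar>\<psi>\<bar> \<le> pi * \<bar>\<psi>\<bar>" using pi_gt3 by (intro mult_right_mono) auto
  ultimately have "\<bar>\<psi>\<bar> \<le> \<bar>sin (pi * \<psi>)\<bar>" unfolding pi\<psi> by linarith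
  moreover have "1 / 4 \<le> exp (-1 :: real)" using exp_le by (simp add: exp_minus field_simps)
  ultimately have "1 * \<psi>\<^sup>2 \<le> (4 * t) * (sin (pi * \<psi>))\<^sup>2"
    using t by (intro mult_mono) (auto simp: abs_le_square_iff)
  then have "\<psi>\<^sup>2 \<le> (norm (1 - of_real t * ee \<psi>))\<^sup>2"
    unfolding norm2 by (simp add: add_increasing)
  then show ?thesis by (simp add: power2_le_iff_abs_le)
qed

lemma obtain_reduced_fraction_mod_1:
  fixes k :: int and m :: nat
  assumes "m \<ge> 1"
  obtains a q :: nat and j :: int
  where "1 \<le> a" "a \<le> q" "q \<le> m" "coprime a q"
    and "real_of_int k / real m = real a / real q + of_int j"
proof -
  define g where "g = gcd k (int m)"
  define q where "q = int m div g"
  define b where "b = k div g"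
  have g: "g > 0" using assms by (simp add: g_def)
  have m_eq: "int m = q * g" and k_eq: "k = b * g" by (simp_all add: q_def b_def g_def)
  have "0 < q * g" using assms by (simp flip: m_eq)
  then have q: "q > 0" using g by (simp add: zero_less_mult_iff)
  have "q * 1 \<le> q * g" using q g by (intro mult_left_mono) auto
  then have "q \<le> int m" by (simp add: m_eq)
  have "coprime b q" unfolding b_def q_def g_def using assms by (intro div_gcd_coprime) auto
  define a where "a = (b - 1) mod q + 1"
  define j where "j = (b - 1) div q"
  have "(b - 1) mod q < q" "0 \<le> (b - 1) mod q" using q by simp_all
  then have a: "1 \<le> a" "a \<le> q" by (simp_all add: a_def)
  have b_eq: "b = j * q + a" using div_mult_mod_eq[of "b - 1" q] by (simp add: a_def j_def)
  then have "gcd q a = gcd q b" by (simp add: gcd_add_mult)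
  then have "coprime a q" using \<open>coprime b q\<close> by (metis coprime_iff_gcd_eq_1 gcd.commute)
  have "real m = of_int q * of_int g" using m_eq by (metis of_int_mult of_int_of_nat_eq)
  then have "real_of_int k / real m = of_int b / of_int q" using g by (simp add: k_eq)
  also have "\<dots> = of_int a / of_int q + of_int j" using q by (simp add: b_eq add_divide_distrib)
  finally show thesis
    using that[of "nat a" "nat q" j] a q \<open>q \<le> int m\<close> \<open>coprime a q\<close>
    by (simp add: coprime_int_iff[symmetric] nat_le_iff)
qed

lemma abs_sub_int_ge_on_minor_arcs:
  assumes \<theta>: "\<theta> \<in> minor_arcs A X" and X: "X > 0"
    and m: "1 \<le> m" "real m \<le> (ln X) powr A"
  shows "(ln X) powr A / X \<le> \<bar>real m * \<theta> - of_int k\<bar>"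
proof (rule ccontr)
  define Q where "Q = (ln X) powr A"
  assume "\<not> (ln X) powr A / X \<le> \<bar>real m * \<theta> - of_int k\<bar>"
  then have close: "\<bar>real m * \<theta> - of_int k\<bar> < Q / X" by (simp add: Q_def)
  obtain a q j where aq: "1 \<le> a" "a \<le> q" "q \<le> m" "coprime a q"
    and k: "real_of_int k / real m = real a / real q + of_int j"
    using obtain_reduced_fraction_mod_1[OF m(1), of k] by blast
  have "\<theta> - real a / real q - of_int j = \<theta> - of_int k / real m" by (simp add: k)
  also have "\<dots> = (real m * \<theta> - of_int k) / real m" using m(1) by (simp add: field_simps)
  finally have "\<bar>\<theta> - real a / real q - of_int j\<bar> = \<bar>real m * \<theta> - of_int k\<bar> / real m"
    by simp
  also have "\<dots> < Q / X / real m" using close by (rule divide_strict_right_mono) (use m(1) in simp)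
  also have "\<dots> \<le> Q / (real q * X)"
  proof -
    have "real q * X \<le> real m * X" using aq X by (intro mult_right_mono) auto
    then have "Q / (real m * X) \<le> Q / (real q * X)"
      using aq X by (intro divide_left_mono) (auto simp: Q_def)
    then show ?thesis by (simp add: mult.commute)
  qed
  finally have "\<bar>\<theta> - real a / real q - of_int j\<bar> < delta_q A X q" by (simp add: delta_q_def Q_def)
  moreover have "real q \<le> (ln X) powr A" using aq(3) m(2) by (meson of_nat_le_iff order_trans)
  ultimately have "\<theta> \<in> major_arcs A X" using aq unfolding major_arcs_def by blast
  then show False using \<theta> by (simp add: minor_arcs_def)
qed

lemma norm_div_one_minus_le:
  fixes u :: "'a :: real_normed_field"
  assumes "norm u < 1"
  shows "norm (u / (1 - u)) \<le> norm u / (1 - norm u)"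
proof -
  have "1 - norm u \<le> norm (1 - u)" using norm_triangle_ineq2[of 1 u] by simp
  then have "norm u / norm (1 - u) \<le> norm u / (1 - norm u)"
    using assms by (intro divide_left_mono mult_pos_pos) auto
  then show ?thesis by (simp add: norm_divide)
qed

lemma exp_neg_div_one_minus_le:
  fixes y :: real
  assumes "y > 0"
  shows "exp (-y) / (1 - exp (-y)) \<le> 1 / y"
proof -
  have "exp (-y) * (1 + y) \<le> exp (-y) * exp y" using exp_ge_add_one_self[of y] by simp
  then have "exp (-y) * y \<le> 1 - exp (-y)" by (simp add: exp_minus algebra_simps)
  then show ?thesis using assms by (simp add: field_simps)
qed

lemma one_div_max_le_powr:
  fixes a b s :: real
  assumes "0 < a" "0 < b" "0 \<le> s" "s \<le> 1"
  shows "1 / max a b \<le> a powr (- s) * b powr (s - 1)"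
proof -
  have "a powr s * b powr (1 - s) \<le> max a b powr s * max a b powr (1 - s)"
    using assms by (intro mult_mono powr_mono2) auto
  also have "\<dots> = max a b" using assms by (simp flip: powr_add)
  finally have "1 / max a b \<le> 1 / (a powr s * b powr (1 - s))"
    using assms by (intro divide_left_mono) auto
  also have "\<dots> = a powr (- s) * b powr (- (1 - s))"
    by (simp only: powr_minus_divide) simp
  finally show ?thesis by simp
qed

lemma norm_power_div_one_minus_le_on_minor_arcs:
  fixes X A \<theta> :: real and m :: nat
  defines "z \<equiv> of_real (exp (-1 / X)) * ee \<theta>" and "Q \<equiv> (ln X) powr A"
  assumes \<theta>: "\<theta> \<in> minor_arcs A X" and Q: "0 < Q" "Q \<le> X" and m: "1 \<le> m"
  shows "norm (z ^ m / (1 - z ^ m)) \<le> X * Q powr (-1/4) * real m powr (-3/4)"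
proof -
  have X: "X > 0" using Q by linarith
  define t where "t = exp (- (real m / X))"
  have "exp (-1 / X) ^ m = t" by (simp add: t_def flip: exp_of_nat_mult)
  then have zm: "z ^ m = of_real t * ee (real m * \<theta>)"
    by (simp add: z_def power_mult_distrib ee_power flip: of_real_power)
  have t: "0 < t" "t < 1" using X m by (auto simp: t_def)
  have norm_zm: "norm (z ^ m / (1 - z ^ m)) = t / norm (1 - z ^ m)"
    using t by (simp add: zm norm_mult norm_divide)
  have "norm (z ^ m / (1 - z ^ m)) \<le> X / max (real m) Q"
  proof (cases "real m \<le> Q")
    case True
    define \<psi> where "\<psi> = real m * \<theta> - of_int (round (real m * \<theta>))"
    have "\<bar>\<psi>\<bar> \<le> 1/2"
      using of_int_round_abs_le[of "real m * \<theta>"] by (simp add: \<psi>_def abs_minus_commute)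
    moreover have "real m / X \<le> 1" using True Q X by simp
    then have "exp (-1) \<le> t" by (simp add: t_def)
    moreover have "ee (real m * \<theta>) = ee \<psi>"
      using ee_add_of_int[of \<psi> "round (real m * \<theta>)"] by (simp add: \<psi>_def)
    ultimately have "\<bar>\<psi>\<bar> \<le> norm (1 - z ^ m)"
      using abs_le_norm_one_minus_mult_ee by (simp add: zm)
    moreover have "Q / X \<le> \<bar>\<psi>\<bar>"
      unfolding \<psi>_def Q_def using abs_sub_int_ge_on_minor_arcs[OF \<theta> X m] True by (simp add: Q_def)
    ultimately have "Q / X \<le> norm (1 - z ^ m)" by linarith
    then have "t / norm (1 - z ^ m) \<le> 1 / (Q / X)"
      using t Q X by (intro frac_le) auto
    also have "\<dots> = X / max (real m) Q" using True by (simp add: max_def)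
    finally show ?thesis by (simp only: norm_zm)
  next
    case False
    have "norm (z ^ m / (1 - z ^ m)) \<le> t / (1 - t)"
      using norm_div_one_minus_le[of "z ^ m"] t by (simp add: zm norm_mult)
    also have "\<dots> \<le> 1 / (real m / X)"
      unfolding t_def using X m by (intro exp_neg_div_one_minus_le) auto
    also have "\<dots> = X / max (real m) Q" using False by (simp add: max_def)
    finally show ?thesis .
  qed
  also have "\<dots> = X * (1 / max (real m) Q)" by simp
  also have "\<dots> \<le> X * (real m powr (- (3/4)) * Q powr (3/4 - 1))"
    by (rule mult_left_mono[OF one_div_max_le_powr]) (use m Q X in auto)
  finally show ?thesis by (simp add: ac_simps)
qed

lemma norm_Phi_absmu_le_on_minor_arcs:
  fixes X A \<theta> :: real
  defines "Q \<equiv> (ln X) powr A"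
  assumes \<theta>: "\<theta> \<in> minor_arcs A X" and Q: "0 < Q" "Q \<le> X"
  shows "norm (Phi_absmu (of_real (exp (-1 / X)) * ee \<theta>)) \<le>
           X * Q powr (-1/4) * (\<Sum>\<^sub>\<infinity>d\<in>{1..}. real d powr (-3/2)) * (\<Sum>j. real (Suc j) powr (-7/4))"
proof (rule norm_Phi_absmu_le)
  show "norm (of_real (exp (-1 / X)) * ee \<theta>) < 1" using Q by (simp add: norm_mult)
  show "0 \<le> X * Q powr (-1/4)" using Q by simp
  show "norm ((of_real (exp (-1 / X)) * ee \<theta>) ^ m / (1 - (of_real (exp (-1 / X)) * ee \<theta>) ^ m))
          \<le> X * Q powr (-1/4) * real m powr (-3/4)" if "1 \<le> m" for m
    using norm_power_div_one_minus_le_on_minor_arcs[OF \<theta> Q[unfolded Q_def] that] by (simp only: Q_def)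
qed

theorem lemma6p8:
  fixes A :: real
  assumes "A > 0"
  shows "\<exists>C X0. \<forall>X \<ge> X0. \<forall>\<theta> \<in> minor_arcs A X.
           norm (Phi_absmu (of_real (exp (-1 / X)) * ee \<theta>)) \<le> C * X * (ln X) powr (10 - A / 4)"
proof -
  define C where "C = (\<Sum>\<^sub>\<infinity>d\<in>{1..}. real d powr (-3/2)) * (\<Sum>j. real (Suc j) powr (-7/4))"
  have "summable (\<lambda>j. real j powr (-7/4))" by (simp add: summable_real_powr_iff)
  then have "summable (\<lambda>j. real (Suc j) powr (-7/4))" by (subst summable_Suc_iff)
  then have "0 \<le> C" unfolding C_def by (intro mult_nonneg_nonneg infsum_nonneg suminf_nonneg) auto
  have "eventually (\<lambda>X. (ln X) powr A \<le> X) at_top" using \<open>A > 0\<close> by real_asymp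
  then have "eventually (\<lambda>X. (ln X) powr A \<le> X \<and> 3 \<le> X) at_top"
    by (intro eventually_conj eventually_ge_at_top)
  then obtain X0 where X0: "\<And>X. X \<ge> X0 \<Longrightarrow> (ln X) powr A \<le> X \<and> 3 \<le> X"
    by (auto simp: eventually_at_top_linorder)
  have "norm (Phi_absmu (of_real (exp (-1 / X)) * ee \<theta>)) \<le> C * X * (ln X) powr (10 - A / 4)"
    if "X \<ge> X0" "\<theta> \<in> minor_arcs A X" for X \<theta>
  proof -
    define Q where "Q = (ln X) powr A"
    have X: "3 \<le> X" "Q \<le> X" using X0[OF \<open>X \<ge> X0\<close>] by (auto simp: Q_def)
    then have lnX: "1 \<le> ln X" using exp_le by (simp add: ln_ge_iff)
    then have "0 < Q" by (simp add: Q_def)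
    have "Q powr (-1/4) = (ln X) powr (- (A / 4))" using lnX by (simp add: Q_def powr_powr)
    also have "\<dots> \<le> (ln X) powr (10 - A / 4)" using lnX by (intro powr_mono) auto
    finally have Q_le: "Q powr (-1/4) \<le> (ln X) powr (10 - A / 4)" .
    have "norm (Phi_absmu (of_real (exp (-1 / X)) * ee \<theta>)) \<le> X * Q powr (-1/4) * C"
      using norm_Phi_absmu_le_on_minor_arcs[OF \<open>\<theta> \<in> minor_arcs A X\<close>] \<open>0 < Q\<close> X
      unfolding Q_def C_def by (simp only: mult.assoc)
    also have "\<dots> \<le> X * (ln X) powr (10 - A / 4) * C"
      using X Q_le \<open>0 \<le> C\<close> by (intro mult_right_mono mult_left_mono) auto
    finally show ?thesis by (simp only: ac_simps)
  qed
  then show ?thesis by blast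
qed

end
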